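(* Let $\ell\in\mathbb{Z}_{\ge 2}$ and let $a_{n,m}$ and $b_{n,m}=b_{n,m}(\ell)$ be as in the context. Then $$\sum_{\substack{m\ge0,\ m\equiv \ell-2\bmod\ell\\ n\ge \ell-2}} b_{n,m}x^n \;=\; \frac{1+x\sum_{\substack{m\ge0,\ m\equiv \ell-1\bmod\ell\\ n\ge \ell-1}} a_{n,m}x^n}{x\,U_{\ell-1}\big(\tfrac{1}{2x}\big)}.$$
   Context: $U_j$ is the $j$th Chebyshev polynomial of the second kind: $U_0(x)=1$, $U_1(x)=2x$, $U_j(x)=2xU_{j-1}(x)-U_{j-2}(x)$. For $n,m\in\mathbb{Z}_{\ge 0}$, $a_{n,m}$ is the number of unit step paths $(x_0,\dots,x_n)$ on $\mathbb{Z}_{\ge0}$ (integers $x_i\ge0$, $|x_i-x_{i-1}|=1$) with $x_0=0$, $x_n=m$. For fixed $\ell\in\mathbb{Z}_{\ge2}$, $b_{n,m}=b_{n,m}(\ell)$ is defined by: $b_{n,m}=a_{n,m}$ if $m\equiv-1\pmod\ell$; $b_{n,m}=b_{n-1,m-1}+b_{n-1,m+1}$ if $m\equiv m_0\pmod\ell$ with $0\le m_0<\ell-2$; $b_{n,m}=b_{n-1,m-1}$ if $m\equiv-2\pmod\ell$; the recursion is used for $n\ge1$ with $b_{0,0}=1$, $b_{0,m}=0$ for $m>0$, and $b_{n,-1}=0$. The identity is one of formal Laurent series in $x$ (the right-hand side being expanded as a power series in $x$). *)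

theory Defs
  imports "HOL-Analysis.Analysis" "HOL-Computational_Algebra.Formal_Laurent_Series"
begin

fun chebU :: "nat \<Rightarrow> 'a::comm_ring_1 \<Rightarrow> 'a" where
  "chebU 0 y = 1"
| "chebU (Suc 0) y = 2 * y"
| "chebU (Suc (Suc j)) y = 2 * y * chebU (Suc j) y - chebU j y"

definition step_paths :: "nat \<Rightarrow> nat \<Rightarrow> nat list set" where
  "step_paths n m = {xs. length xs = Suc n \<and> xs ! 0 = 0 \<and> xs ! n = m \<and>
      (\<forall>i<n. \<bar>int (xs ! Suc i) - int (xs ! i)\<bar> = 1)}"

definition a_paths :: "nat \<Rightarrow> nat \<Rightarrow> nat" where
  "a_paths n m = card (step_paths n m)"

fun b_seq :: "nat \<Rightarrow> nat \<Rightarrow> nat \<Rightarrow> nat" where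
  "b_seq l 0 m = (if m = 0 then 1 else 0)"
| "b_seq l (Suc n) m =
     (if m mod l = l - 1 then a_paths (Suc n) m
      else if m mod l = l - 2 then (if m = 0 then 0 else b_seq l n (m - 1))
      else (if m = 0 then 0 else b_seq l n (m - 1)) + b_seq l n (m + 1))"

end

theory Submission
  imports Defs
begin

unbundle no vec_syntax

text \<open>
  Let \<open>\<beta> m = \<Sum>n. b(n,m) x^n\<close> and \<open>d = \<ell> - 2\<close>. On a block \<open>k\<ell> \<le> m < (k+1)\<ell>\<close> the recursion
  for \<open>b\<close> reads \<open>\<beta> m = x \<beta>(m-1) + x \<beta>(m+1)\<close> (plus \<open>1\<close> if \<open>m = 0\<close>) below the top \<open>c = k\<ell> + d\<close>,
  and \<open>\<beta> c = x \<beta>(c-1)\<close> at the top. Solving this three-term recurrence downwards from \<open>c\<close> gives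
  \<open>x^i \<beta>(c-i) = q i \<beta> c\<close>, where \<open>q i = x^i U_i(1/(2x))\<close> satisfies \<open>q(i+2) = q(i+1) - x\<^sup>2 q i\<close>.
  At the bottom of the block this becomes \<open>q(d+1) \<beta> c = x^d ([k = 0] + x \<beta>(k\<ell>-1))\<close>, and
  \<open>\<beta>(k\<ell>-1)\<close> is the generating series of \<open>a(n,k\<ell>-1)\<close>. Summing over \<open>k\<close> and dividing by
  \<open>q(d+1)\<close> gives the identity. The sums over \<open>m\<close> are finite coefficientwise, since
  \<open>b(n,m) = a(n,m) = 0\<close> for \<open>m > n\<close>.
\<close>

lemma mult_add_mod_self: "j < l \<Longrightarrow> (k * l + j) mod l = (j::nat)"
  by simp

lemma infsum_residue_class_eq_sum:
  fixes f :: "nat \<Rightarrow> 'a::{comm_monoid_add, t2_space}"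
  assumes "j < l" "\<And>m. N * l \<le> m \<Longrightarrow> f m = 0"
  shows "(\<Sum>\<^sub>\<infinity>m\<in>{m. m mod l = j}. f m) = (\<Sum>k<N. f (k * l + j))"
proof -
  let ?h = "\<lambda>k. k * l + j"
  have "(\<Sum>\<^sub>\<infinity>m\<in>{m. m mod l = j}. f m) = (\<Sum>\<^sub>\<infinity>m\<in>?h ` {..<N}. f m)"
  proof (rule infsum_cong_neutral)
    fix m
    assume m: "m \<in> {m. m mod l = j} - ?h ` {..<N}"
    then have "m = ?h (m div l)" by (metis (mono_tags) Diff_iff div_mult_mod_eq mem_Collect_eq)
    with m have "N \<le> m div l" by (metis DiffD2 imageI lessThan_iff not_less)
    then have "N * l \<le> m" by (meson div_times_less_eq_dividend le_trans mult_le_mono1)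
    then show "f m = 0" by (rule assms(2))
  qed (use assms(1) in auto)
  also have "\<dots> = (\<Sum>k<N. f (k * l + j))"
    using assms(1) by (simp add: sum.reindex inj_on_def)
  finally show ?thesis .
qed

lemma fps_cutoff_Suc_fps_X_mult:
  fixes f g :: "'a::comm_ring_1 fps"
  shows "fps_cutoff n f = fps_cutoff n g \<Longrightarrow> fps_cutoff (Suc n) (fps_X * f) = fps_cutoff (Suc n) (fps_X * g)"
  by (auto simp: fps_cutoff_eq_fps_cutoff_iff)

lemma step_paths_nth_le:
  assumes "xs \<in> step_paths n m" "i \<le> n"
  shows "xs ! i \<le> i"
  using assms(2)
proof (induction i)
  case 0
  then show ?case using assms(1) by (simp add: step_paths_def)
next
  case (Suc i)
  then have "\<bar>int (xs ! Suc i) - int (xs ! i)\<bar> = 1" using assms(1) by (simp add: step_paths_def)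
  with Suc show ?case by linarith
qed

lemma a_paths_eq_0_if_less:
  assumes "n < m"
  shows "a_paths n m = 0"
proof -
  have "step_paths n m = {}"
    using step_paths_nth_le[of _ n m n] assms by (force simp: step_paths_def)
  then show ?thesis by (simp add: a_paths_def)
qed

lemma b_seq_eq_0_if_less: "n < m \<Longrightarrow> b_seq l n m = 0"
  by (induction n arbitrary: m) (auto simp: a_paths_eq_0_if_less)

definition b_fps :: "nat \<Rightarrow> nat \<Rightarrow> 'a::comm_ring_1 fps" where
  "b_fps l m = Abs_fps (\<lambda>n. of_nat (b_seq l n m))"

lemma b_fps_recurrence:
  assumes "m mod l \<noteq> l - 1" "m mod l \<noteq> l - 2"
  shows "b_fps l m = fps_X * b_fps l (m + 1) + (if m = 0 then 1 else fps_X * b_fps l (m - 1))"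
proof (rule fps_ext)
  fix n
  show "b_fps l m $ n = (fps_X * b_fps l (m + 1) + (if m = 0 then 1 else fps_X * b_fps l (m - 1))) $ n"
    using assms by (cases n) (auto simp: b_fps_def)
qed

lemma b_fps_residue_l_minus_2:
  assumes "m mod l = l - 2" "l \<ge> 2"
  shows "b_fps l m = (if m = 0 then 1 else fps_X * b_fps l (m - 1))"
proof (rule fps_ext)
  fix n
  show "b_fps l m $ n = (if m = 0 then 1 else fps_X * b_fps l (m - 1)) $ n"
    using assms by (cases n) (auto simp: b_fps_def)
qed

lemma b_fps_residue_l_minus_1:
  assumes "m mod l = l - 1" "l \<ge> 2"
  shows "b_fps l m = Abs_fps (\<lambda>n. of_nat (a_paths n m))"
proof (rule fps_ext)
  fix n
  from assms have "m \<noteq> 0" by (intro notI) simp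
  then show "b_fps l m $ n = Abs_fps (\<lambda>n. of_nat (a_paths n m)) $ n"
    using assms by (cases n) (auto simp: b_fps_def a_paths_eq_0_if_less)
qed

fun chebU_fps :: "nat \<Rightarrow> 'a::comm_ring_1 fps" where
  "chebU_fps 0 = 1"
| "chebU_fps (Suc 0) = 1"
| "chebU_fps (Suc (Suc j)) = chebU_fps (Suc j) - fps_X\<^sup>2 * chebU_fps j"

lemma chebU_fps_nth_0: "chebU_fps j $ 0 = 1"
  by (induction j rule: chebU_fps.induct) (auto simp: power2_eq_square)

lemma fls_X_power_chebU:
  "fls_X ^ j * chebU j (inverse (2 * fls_X)) = fps_to_fls (chebU_fps j :: 'a::field_char_0 fps)"
proof (induction j rule: chebU_fps.induct)
  case 1
  then show ?case by simp
next
  case 2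
  have "fls_X * (2 * inverse (2 * fls_X)) = (2 * fls_X) * inverse (2 * fls_X :: 'a fls)"
    by (simp only: mult_ac)
  also have "\<dots> = 1" by simp
  finally show ?case by simp
next
  case (3 i)
  let ?y = "inverse (2 * fls_X) :: 'a fls"
  have y: "2 * ?y * fls_X = 1"
    by (simp add: mult.commute)
  have "fls_X ^ Suc (Suc i) * chebU (Suc (Suc i)) ?y
      = (2 * ?y * fls_X) * (fls_X ^ Suc i * chebU (Suc i) ?y) - fls_X\<^sup>2 * (fls_X ^ i * chebU i ?y)"
    by (simp add: algebra_simps power2_eq_square)
  also have "\<dots> = fps_to_fls (chebU_fps (Suc i)) - fls_X\<^sup>2 * fps_to_fls (chebU_fps i)"
    unfolding y 3 by simp
  also have "\<dots> = fps_to_fls (chebU_fps (Suc (Suc i)))"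
    by (simp add: fls_times_fps_to_fls fps_to_fls_power)
  finally show ?case .
qed

lemma b_fps_block_descent:
  assumes "l = d + 2" "j + i = d"
  shows "fps_X ^ i * b_fps l (k * l + j) = chebU_fps i * (b_fps l (k * l + d) :: 'a::comm_ring_1 fps)"
  using assms(2)
proof (induction i arbitrary: j rule: chebU_fps.induct)
  case 1
  then show ?case by simp
next
  case (2 j)
  have top: "(k * l + d) mod l = l - 2" and nz: "k * l + d \<noteq> 0"
    and pred: "k * l + d - 1 = k * l + j"
    using mult_add_mod_self[of d l k] assms(1) 2 by simp_all
  have "l \<ge> 2" using assms(1) by simp
  with top nz have "b_fps l (k * l + d) = fps_X * (b_fps l (k * l + d - 1) :: 'a fps)"
    by (simp only: b_fps_residue_l_minus_2 if_False)
  then show ?case unfolding pred by simp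
next
  case (3 i j)
  have "(k * l + Suc j) mod l \<noteq> l - 1" "(k * l + Suc j) mod l \<noteq> l - 2"
    using mult_add_mod_self[of "Suc j" l k] assms(1) "3.prems" by simp_all
  then have "b_fps l (k * l + Suc j)
      = fps_X * b_fps l (k * l + Suc (Suc j)) + fps_X * (b_fps l (k * l + j) :: 'a fps)"
    using b_fps_recurrence[of "k * l + Suc j" l] by simp
  then have "fps_X ^ Suc (Suc i) * b_fps l (k * l + j)
      = fps_X ^ Suc i * b_fps l (k * l + Suc j)
        - fps_X\<^sup>2 * (fps_X ^ i * (b_fps l (k * l + Suc (Suc j)) :: 'a fps))"
    by (simp add: algebra_simps power2_eq_square)
  also have "\<dots> = chebU_fps (Suc (Suc i)) * b_fps l (k * l + d)"
    using "3.IH"[of "Suc j"] "3.IH"[of "Suc (Suc j)"] "3.prems" by (simp add: algebra_simps)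
  finally show ?case .
qed

lemma b_fps_block:
  assumes "l = d + 2"
  shows "chebU_fps (d + 1) * b_fps l (k * l + d)
           = fps_X ^ d * (if k = 0 then 1 else fps_X * (b_fps l (k * l - 1) :: 'a::comm_ring_1 fps))"
proof (cases d)
  case 0
  have "(k * l) mod l = 0" by simp
  then have "(k * l) mod l = l - 2" "l \<ge> 2" using assms 0 by simp_all
  then show ?thesis using b_fps_residue_l_minus_2[of "k * l" l] 0 by simp
next
  case (Suc e)
  let ?c = "b_fps l (k * l + d) :: 'a fps"
  have "(k * l) mod l = 0" by simp
  then have "(k * l) mod l \<noteq> l - 1" "(k * l) mod l \<noteq> l - 2" using assms Suc by simp_all
  then have bottom: "b_fps l (k * l) = fps_X * b_fps l (k * l + 1)
      + (if k = 0 then 1 else fps_X * (b_fps l (k * l - 1) :: 'a fps))"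
    using b_fps_recurrence[of "k * l" l] by simp
  have "fps_X ^ d * b_fps l (k * l) = chebU_fps d * ?c"
    using b_fps_block_descent[OF assms, of 0 d k] by simp
  moreover have "fps_X ^ e * b_fps l (k * l + 1) = chebU_fps e * ?c"
    using b_fps_block_descent[OF assms, of 1 e k] Suc by simp
  ultimately have "chebU_fps (d + 1) * ?c
      = fps_X ^ d * b_fps l (k * l) - fps_X ^ Suc d * b_fps l (k * l + 1)"
    using Suc by (simp add: algebra_simps power2_eq_square)
  then show ?thesis unfolding bottom by (simp add: algebra_simps)
qed

lemma fps_cutoff_residue_class_series:
  fixes g :: "nat \<Rightarrow> nat \<Rightarrow> nat"
  assumes "j < l" "\<And>n m. n < m \<Longrightarrow> g n m = 0"
  shows "fps_cutoff N (Abs_fps (\<lambda>n. if j \<le> n then (\<Sum>\<^sub>\<infinity>m\<in>{m. m mod l = j}. real (g n m)) else 0))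
       = fps_cutoff N (\<Sum>k<N. Abs_fps (\<lambda>n. real (g n (k * l + j))))"
  unfolding fps_cutoff_eq_fps_cutoff_iff
proof (intro allI impI)
  fix n
  assume "n < N"
  have "(\<Sum>\<^sub>\<infinity>m\<in>{m. m mod l = j}. real (g n m)) = (\<Sum>k<N. real (g n (k * l + j)))"
  proof (rule infsum_residue_class_eq_sum)
    fix m
    assume "N * l \<le> m"
    moreover have "N \<le> N * l" using assms(1) by simp
    ultimately have "n < m" using \<open>n < N\<close> by linarith
    then show "real (g n m) = 0" using assms(2) by simp
  qed (rule assms(1))
  moreover have "(\<Sum>k<N. real (g n (k * l + j))) = 0" if "n < j"
    using that assms(2) by (intro sum.neutral) auto
  ultimately show "fps_nth (Abs_fps (\<lambda>n. if j \<le> n then (\<Sum>\<^sub>\<infinity>m\<in>{m. m mod l = j}. real (g n m)) else 0)) n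
      = fps_nth (\<Sum>k<N. Abs_fps (\<lambda>n. real (g n (k * l + j)))) n"
    by (auto simp: fps_sum_nth)
qed

lemma b_fps_sum_blocks:
  assumes "l = d + 2"
  shows "(\<Sum>k<Suc n. b_fps l (k * l + d)) * chebU_fps (d + 1)
       = fps_X ^ d * (1 + fps_X * (\<Sum>k<n. Abs_fps (\<lambda>i. of_nat (a_paths i (k * l + Suc d))))
           :: 'a::comm_ring_1 fps)"
proof -
  have last: "b_fps l (Suc k * l - 1) = Abs_fps (\<lambda>i. of_nat (a_paths i (k * l + Suc d)))" for k
  proof -
    have "Suc k * l - 1 = k * l + Suc d" "(k * l + Suc d) mod l = l - 1" "l \<ge> 2"
      using mult_add_mod_self[of "Suc d" l k] assms by simp_all
    then show ?thesis using b_fps_residue_l_minus_1 by metis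
  qed
  have "(\<Sum>k<Suc n. b_fps l (k * l + d)) * chebU_fps (d + 1)
      = (\<Sum>k<Suc n. fps_X ^ d * (if k = 0 then 1 else fps_X * (b_fps l (k * l - 1) :: 'a fps)))"
    unfolding sum_distrib_right by (simp only: mult.commute[of _ "chebU_fps _"] b_fps_block[OF assms])
  also have "\<dots> = fps_X ^ d * (1 + fps_X * (\<Sum>k<n. b_fps l (Suc k * l - 1)))"
    by (simp only: sum.lessThan_Suc_shift) (simp add: sum_distrib_left algebra_simps)
  finally show ?thesis unfolding last .
qed

lemma b_series_mult_chebU_fps:
  fixes l :: nat
  assumes "l \<ge> 2"
  shows "Abs_fps (\<lambda>n. if n \<ge> l - 2
            then (\<Sum>\<^sub>\<infinity>m\<in>{m. m mod l = l - 2}. real (b_seq l n m)) else 0) * chebU_fps (l - 1)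
       = fps_X ^ (l - 2) * (1 + fps_X * Abs_fps (\<lambda>n. if n \<ge> l - 1
            then (\<Sum>\<^sub>\<infinity>m\<in>{m. m mod l = l - 1}. real (a_paths n m)) else 0))"
    (is "?B * ?q = fps_X ^ (l - 2) * (1 + fps_X * ?A)")
proof (rule fps_ext)
  fix n
  obtain d where l: "l = d + 2" using assms by (metis add.commute le_Suc_ex)
  define S where "S = (\<Sum>k<Suc n. b_fps l (k * l + d) :: real fps)"
  define T where "T = (\<Sum>k<n. Abs_fps (\<lambda>i. real (a_paths i (k * l + Suc d))))"
  have residues: "l - 2 = d" "l - 1 = Suc d" "d < l" "Suc d < l" using l by simp_all
  have cutoff_B: "fps_cutoff (Suc n) ?B = fps_cutoff (Suc n) S"
    unfolding residues S_def b_fps_def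
    by (rule fps_cutoff_residue_class_series) (use residues b_seq_eq_0_if_less in auto)
  have "fps_cutoff n ?A = fps_cutoff n T"
    unfolding residues T_def
    by (rule fps_cutoff_residue_class_series) (use residues a_paths_eq_0_if_less in auto)
  then have "fps_cutoff (Suc n) (fps_X * ?A) = fps_cutoff (Suc n) (fps_X * T)"
    by (rule fps_cutoff_Suc_fps_X_mult)
  then have cutoff_A: "fps_cutoff (Suc n) (1 + fps_X * ?A) = fps_cutoff (Suc n) (1 + fps_X * T)"
    by (simp only: fps_cutoff_add)
  have "(?B * ?q) $ n = (fps_cutoff (Suc n) ?B * ?q) $ n"
    by (rule fps_cutoff_left_mult_nth[symmetric]) simp
  also have "\<dots> = (S * ?q) $ n"
    unfolding cutoff_B by (rule fps_cutoff_left_mult_nth) simp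
  also have "S * ?q = fps_X ^ (l - 2) * (1 + fps_X * T)"
    using b_fps_sum_blocks[OF l, of n] unfolding residues S_def T_def by simp
  also have "\<dots> $ n = (fps_X ^ (l - 2) * fps_cutoff (Suc n) (1 + fps_X * T)) $ n"
    by (rule fps_cutoff_right_mult_nth[symmetric]) simp
  also have "\<dots> = (fps_X ^ (l - 2) * (1 + fps_X * ?A)) $ n"
    unfolding cutoff_A[symmetric] by (rule fps_cutoff_right_mult_nth) simp
  finally show "(?B * ?q) $ n = (fps_X ^ (l - 2) * (1 + fps_X * ?A)) $ n" .
qed

lemma fls_eq_divide_chebU_if_fps_mult_eq:
  fixes B A :: "'a::field_char_0 fps"
  assumes "B * chebU_fps (Suc d) = fps_X ^ d * (1 + fps_X * A)"
  shows "fps_to_fls B = (1 + fls_X * fps_to_fls A) / (fls_X * chebU (Suc d) (inverse (2 * fls_X)))"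
proof -
  let ?U = "chebU (Suc d) (inverse (2 * fls_X)) :: 'a fls"
  have U: "fls_X ^ d * (fls_X * ?U) = fps_to_fls (chebU_fps (Suc d))"
    using fls_X_power_chebU[of "Suc d"] by (simp add: algebra_simps)
  have "chebU_fps (Suc d) \<noteq> (0 :: 'a fps)"
    using chebU_fps_nth_0[of "Suc d"] by (metis one_neq_zero fps_zero_nth)
  then have nonzero: "fls_X * ?U \<noteq> 0" using U by auto
  have "fls_X ^ d * (fps_to_fls B * (fls_X * ?U)) = fps_to_fls B * fps_to_fls (chebU_fps (Suc d))"
    unfolding U[symmetric] by (simp only: mult_ac)
  also have "\<dots> = fls_X ^ d * (1 + fls_X * fps_to_fls A)"
    using arg_cong[OF assms, of fps_to_fls] by (simp add: fls_times_fps_to_fls fps_to_fls_power)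
  finally have "fps_to_fls B * (fls_X * ?U) = 1 + fls_X * fps_to_fls A" by simp
  with nonzero show ?thesis by (simp add: eq_divide_eq)
qed

theorem lemma2p10:
  fixes l :: nat
  assumes "l \<ge> 2"
  shows "fps_to_fls (Abs_fps (\<lambda>n. if n \<ge> l - 2
            then (\<Sum>\<^sub>\<infinity>m\<in>{m. m mod l = l - 2}. real (b_seq l n m)) else 0))
       = (1 + fls_X * fps_to_fls (Abs_fps (\<lambda>n. if n \<ge> l - 1
            then (\<Sum>\<^sub>\<infinity>m\<in>{m. m mod l = l - 1}. real (a_paths n m)) else 0)))
         / (fls_X * chebU (l - 1) (inverse (2 * fls_X)))"
proof -
  have l: "l - 1 = Suc (l - 2)" using assms by simp
  show ?thesis
    using fls_eq_divide_chebU_if_fps_mult_eq[OF b_series_mult_chebU_fps[OF assms, unfolded l]]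
    unfolding l .
qed

end
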